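(* Define $\alpha,\beta:[0,2\pi]\to\mathbb{R}^3$ and $\gamma:[0,\pi]\to\mathbb{R}^3$ by $\alpha(t)=(\cos t,\sin t,1)$, $\beta(t)=(\cos t,\sin t,-1)$, $\gamma(t)=\big(2\cos(2t)-1,\ 2\sin(2t),\ \tfrac98\cos t-\tfrac18\cos(3t)\big)$, and let $C=\operatorname{conv}\big(\alpha([0,2\pi])\cup\beta([0,2\pi])\cup\gamma([0,\pi])\big)\subseteq\mathbb{R}^3$. Then the cone $\mathcal{K}=\operatorname{cone}(C\times\{1\})\subseteq\mathbb{R}^4$ is nice.
   Context: $\operatorname{cone}S=\{\lambda x:x\in S,\lambda\ge0\}$. A face of a closed convex cone $\mathcal{K}$ is a closed convex subset $\mathcal{F}\subseteq\mathcal{K}$ such that whenever $x,y\in\mathcal{K}$ and $\alpha x+(1-\alpha)y\in\mathcal{F}$ for some $\alpha\in(0,1)$, then $x,y\in\mathcal{F}$. $\mathcal{K}$ is nice if $\mathcal{F}^*=\mathcal{K}^*+\mathcal{F}^\perp$ for every face $\mathcal{F}$, where $S^*=\{y:\langle y,x\rangle\ge0\ \forall x\in S\}$. *)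

theory Defs
  imports "HOL-Analysis.Analysis"
begin

definition cone_of :: "'a::real_vector set \<Rightarrow> 'a set" where
  "cone_of S = {l *\<^sub>R x | l x. x \<in> S \<and> l \<ge> 0}"

definition dual_cone :: "'a::real_inner set \<Rightarrow> 'a set" where
  "dual_cone S = {y. \<forall>x\<in>S. inner y x \<ge> 0}"

definition perp :: "'a::real_inner set \<Rightarrow> 'a set" where
  "perp S = {y. \<forall>x\<in>S. inner y x = 0}"

definition is_face :: "'a::real_inner set \<Rightarrow> 'a set \<Rightarrow> bool" where
  "is_face F K \<longleftrightarrow> closed F \<and> convex F \<and> F \<subseteq> K \<and>
     (\<forall>x\<in>K. \<forall>y\<in>K. \<forall>a. 0 < a \<and> a < 1 \<and> a *\<^sub>R x + (1 - a) *\<^sub>R y \<in> F \<longrightarrow> x \<in> F \<and> y \<in> F)"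

definition nice :: "'a::real_inner set \<Rightarrow> bool" where
  "nice K \<longleftrightarrow> (\<forall>F. is_face F K \<longrightarrow>
     dual_cone F = {u + v | u v. u \<in> dual_cone K \<and> v \<in> perp F})"

definition curve_alpha :: "real \<Rightarrow> real^3" where
  "curve_alpha t = vector [cos t, sin t, 1]"

definition curve_beta :: "real \<Rightarrow> real^3" where
  "curve_beta t = vector [cos t, sin t, -1]"

definition curve_gamma :: "real \<Rightarrow> real^3" where
  "curve_gamma t = vector [2 * cos (2 * t) - 1, 2 * sin (2 * t),
                           9/8 * cos t - 1/8 * cos (3 * t)]"

definition setC :: "(real^3) set" where
  "setC = convex hull (curve_alpha ` {0..2*pi} \<union> curve_beta ` {0..2*pi} \<union> curve_gamma ` {0..pi})"

definition lift4 :: "real^3 \<Rightarrow> real^4" where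
  "lift4 x = vector [x $ 1, x $ 2, x $ 3, 1]"

end

theory Submission
  imports Defs
begin

text \<open>
  Let \<open>S\<close> be the union of the three curves and \<open>G\<close> its lift to height \<open>1\<close>, so that
  \<open>\<K>\<close> is the convex cone generated by the compact set \<open>G\<close>. By Krein--Milman a face \<open>F\<close>
  of \<open>\<K>\<close> is spanned by \<open>G \<inter> F\<close>, so for \<open>y \<in> F\<^sup>*\<close> it suffices to find
  \<open>u \<in> \<K>\<^sup>*\<close> agreeing with \<open>y\<close> on \<open>G \<inter> F\<close>.

  A proper face is contained in the zero set of some \<open>a \<in> \<K>\<^sup>*\<close> that does not vanish on
  \<open>\<K>\<close>. A study of such zero sets along the curves (a Rolle argument for \<open>\<gamma>\<close>) shows that
  the generators of \<open>F\<close> either lie in one of the planes \<open>x\<^sub>3 = \<plusminus>1\<close> or are at most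
  two points. Every point of \<open>S\<close> is exposed, even the end points of \<open>\<gamma>\<close> where it touches the
  circles, so at most two generators are matched by a nonnegative combination of exposing
  functionals. A face with two generators on one circle contains that whole circle, and then
  \<open>y\<close> is matched on the plane of the circle by a multiple of the functional exposing the point
  where \<open>y\<close> is smallest, plus a multiple of the functional \<open>x \<mapsto> x\<^sub>4\<close>.
\<close>

section \<open>Faces and duals of convex cones\<close>

lemma cone_of_eq_conic_hull: "cone_of S = conic hull S"
  unfolding cone_of_def conic_hull_explicit by (simp add: conj_commute)

lemma is_faceD:
  assumes "is_face F K" "x \<in> K" "y \<in> K" "0 < a" "a < 1" "a *\<^sub>R x + (1 - a) *\<^sub>R y \<in> F"
  shows "x \<in> F" "y \<in> F"
  using assms unfolding is_face_def by blast+

lemma is_face_imp_face_of: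
  assumes "is_face F K"
  shows "F face_of K"
proof -
  have "a \<in> F \<and> b \<in> F"
    if ab: "a \<in> K" "b \<in> K" and x: "x \<in> F" "x \<in> open_segment a b" for a b x
  proof -
    obtain u where "0 < u" "u < 1" and xu: "x = (1 - u) *\<^sub>R a + (1 - (1 - u)) *\<^sub>R b"
      using x(2) by (auto simp: in_segment)
    then show ?thesis
      using is_faceD[OF assms ab, of "1 - u"] x(1)[unfolded xu] by simp
  qed
  moreover have "convex F" "F \<subseteq> K"
    using assms unfolding is_face_def by blast+
  ultimately show ?thesis
    unfolding face_of_def by blast
qed

lemma nice_if_dual_face_decomposes:
  assumes "\<And>F y. is_face F K \<Longrightarrow> y \<in> dual_cone F \<Longrightarrow> \<exists>u\<in>dual_cone K. y - u \<in> perp F"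
  shows "nice K"
  unfolding nice_def
proof (intro allI impI set_eqI iffI)
  fix F y
  assume F: "is_face F K"
  show "y \<in> {u + v |u v. u \<in> dual_cone K \<and> v \<in> perp F}" if y: "y \<in> dual_cone F"
  proof -
    obtain u where "u \<in> dual_cone K" "y - u \<in> perp F"
      using assms[OF F y] by blast
    moreover have "y = u + (y - u)"
      by simp
    ultimately show ?thesis
      by blast
  qed
  show "y \<in> dual_cone F" if y: "y \<in> {u + v |u v. u \<in> dual_cone K \<and> v \<in> perp F}"
  proof -
    obtain u v where "y = u + v" "u \<in> dual_cone K" "v \<in> perp F"
      using y by blast
    moreover have "F \<subseteq> K"
      using F unfolding is_face_def by blast
    ultimately show ?thesis
      unfolding dual_cone_def perp_def by (auto simp: inner_add_left)
  qed
qed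

lemma dual_cone_convex_cone_hull: "dual_cone (convex_cone hull S) = dual_cone S"
proof
  show "dual_cone (convex_cone hull S) \<subseteq> dual_cone S"
    using hull_subset[of S convex_cone] unfolding dual_cone_def by blast
  show "dual_cone S \<subseteq> dual_cone (convex_cone hull S)"
  proof
    fix y
    assume y: "y \<in> dual_cone S"
    have "convex_cone {x. 0 \<le> y \<bullet> x}"
      by (auto simp: convex_cone_iff inner_add_right)
    then have "convex_cone hull S \<subseteq> {x. 0 \<le> y \<bullet> x}"
      using y unfolding dual_cone_def by (intro hull_minimal) auto
    then show "y \<in> dual_cone (convex_cone hull S)"
      unfolding dual_cone_def by blast
  qed
qed

lemma perp_convex_cone_hull: "perp (convex_cone hull S) = perp S"
proof
  show "perp (convex_cone hull S) \<subseteq> perp S"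
    using hull_subset[of S convex_cone] unfolding perp_def by blast
  show "perp S \<subseteq> perp (convex_cone hull S)"
  proof
    fix y
    assume y: "y \<in> perp S"
    have "convex_cone {x. y \<bullet> x = 0}"
      by (auto simp: convex_cone_iff inner_add_right)
    then have "convex_cone hull S \<subseteq> {x. y \<bullet> x = 0}"
      using y unfolding perp_def by (intro hull_minimal) auto
    then show "y \<in> perp (convex_cone hull S)"
      unfolding perp_def by blast
  qed
qed

lemma face_of_convex_hull_subset_convex_hull_Int:
  fixes G :: "'a::euclidean_space set"
  assumes "compact G" and "T face_of convex hull G"
  shows "T \<subseteq> convex hull (G \<inter> T)"
proof -
  obtain S where S: "S \<subseteq> G" "T = convex hull S"
    by (rule face_of_convex_hull_subset[OF assms])
  then have "S \<subseteq> G \<inter> T"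
    using hull_subset[of S convex] by blast
  then show ?thesis
    unfolding S(2) by (rule hull_mono)
qed

lemma face_of_convex_cone_hull_subset:
  fixes G :: "'a::euclidean_space set"
  assumes "compact G" and F: "F face_of convex_cone hull G"
  shows "F \<subseteq> convex_cone hull (G \<inter> F)"
proof
  fix f
  assume f: "f \<in> F"
  show "f \<in> convex_cone hull (G \<inter> F)"
  proof (cases "f = 0")
    case True
    then show ?thesis
      by (simp add: convex_cone_hull_contains_0)
  next
    case False
    have "f \<in> conic hull (convex hull G)"
      using f face_of_imp_subset[OF F] False by (auto simp: convex_cone_hull_separate)
    then obtain c x where "0 \<le> c" and x: "x \<in> convex hull G" and fx: "f = c *\<^sub>R x"
      unfolding conic_hull_explicit by blast
    then have "0 < c"
      using False by (cases "c = 0") auto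
    have "conic F"
      using face_of_conic[OF conic_convex_cone_hull F] .
    then have "(1 / c) *\<^sub>R f \<in> F"
      using f \<open>0 < c\<close> by (simp add: conic_mul)
    then have "x \<in> F \<inter> convex hull G"
      using fx \<open>0 < c\<close> x by simp
    moreover have "F \<inter> convex hull G face_of convex_cone hull G \<inter> convex hull G"
      using F by (intro face_of_Int_Int face_of_refl convex_convex_hull)
    moreover have "convex_cone hull G \<inter> convex hull G = convex hull G"
      using convex_hull_subset_convex_cone_hull by (rule Int_absorb1)
    ultimately have "x \<in> convex hull (G \<inter> (F \<inter> convex hull G))"
      using face_of_convex_hull_subset_convex_hull_Int[OF \<open>compact G\<close>] by auto
    then have "x \<in> convex hull (G \<inter> F)"
      using hull_mono[of "G \<inter> (F \<inter> convex hull G)" "G \<inter> F"] by blast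
    then show ?thesis
      using fx \<open>0 \<le> c\<close> convex_hull_subset_convex_cone_hull by (auto intro: convex_cone_hull_mul)
  qed
qed

lemma perp_face_of_convex_cone_hull:
  fixes G :: "'a::euclidean_space set"
  assumes "compact G" and "F face_of convex_cone hull G"
  shows "perp F = perp (G \<inter> F)"
proof
  show "perp F \<subseteq> perp (G \<inter> F)"
    unfolding perp_def by blast
  have "perp (convex_cone hull (G \<inter> F)) \<subseteq> perp F"
    using face_of_convex_cone_hull_subset[OF assms] unfolding perp_def by blast
  then show "perp (G \<inter> F) \<subseteq> perp F"
    by (simp add: perp_convex_cone_hull)
qed

lemma perp_if_dual_cone_vanishes_on_rel_interior:
  fixes F :: "'a::euclidean_space set"
  assumes "convex F" "F \<subseteq> K" "a \<in> dual_cone K" "x \<in> rel_interior F" "a \<bullet> x = 0"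
  shows "a \<in> perp F"
proof -
  have "a \<bullet> f = 0" if f: "f \<in> F" for f
  proof -
    have "F \<noteq> {}"
      using f by blast
    then have "\<forall>z\<in>F. \<exists>e>1. (1 - e) *\<^sub>R z + e *\<^sub>R x \<in> F"
      using convex_rel_interior_iff[OF \<open>convex F\<close> \<open>F \<noteq> {}\<close>] assms(4) by blast
    then obtain e where e: "e > 1" "(1 - e) *\<^sub>R f + e *\<^sub>R x \<in> F"
      using f by blast
    then have "0 \<le> a \<bullet> ((1 - e) *\<^sub>R f + e *\<^sub>R x)"
      using assms(2,3) unfolding dual_cone_def by blast
    then have "0 \<le> (1 - e) * (a \<bullet> f)"
      using assms(5) by (simp add: inner_add_right)
    then have "a \<bullet> f \<le> 0"
      using e(1) by (simp add: zero_le_mult_iff)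
    moreover have "0 \<le> a \<bullet> f"
      using assms(2,3) f unfolding dual_cone_def by blast
    ultimately show ?thesis
      by simp
  qed
  then show ?thesis
    unfolding perp_def by blast
qed

lemma exposing_functional_of_proper_face:
  fixes K :: "'a::euclidean_space set"
  assumes K: "convex_cone K" and F: "F face_of K" "F \<noteq> {}" "F \<noteq> K"
  obtains a where "a \<in> dual_cone K" "a \<in> perp F" "a \<notin> perp K"
proof -
  have "convex K" "conic K"
    using K by (auto simp: convex_cone_def)
  have "convex F" "F \<subseteq> K"
    using F(1) by (auto dest: face_of_imp_convex face_of_imp_subset)
  obtain x where x: "x \<in> rel_interior F"
    using rel_interior_eq_empty[OF \<open>convex F\<close>] F(2) by blast
  then have "x \<in> F"
    using rel_interior_subset by blast
  then have "x \<in> rel_frontier K"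
    using face_of_subset_rel_frontier[OF F(1,3)] by blast
  then have xK: "x \<in> closure K" "x \<notin> rel_interior K"
    unfolding rel_frontier_def by auto
  obtain a where a: "\<And>y. y \<in> closure K \<Longrightarrow> a \<bullet> x \<le> a \<bullet> y"
    "\<And>y. y \<in> rel_interior K \<Longrightarrow> a \<bullet> x < a \<bullet> y"
    by (metis supporting_hyperplane_relative_frontier[OF \<open>convex K\<close> xK])
  have a_le: "a \<bullet> x \<le> a \<bullet> y" if "y \<in> K" for y
    using a(1) closure_subset that by blast
  \<comment> \<open>The supporting hyperplane passes through \<open>0\<close>, since \<open>0\<close> and \<open>2 x\<close> lie in \<open>K\<close>.\<close>
  have "x \<in> K"
    using \<open>x \<in> F\<close> \<open>F \<subseteq> K\<close> by blast
  then have "2 *\<^sub>R x \<in> K"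
    using conic_mul[OF \<open>conic K\<close>] by simp
  then have "a \<bullet> x \<le> a \<bullet> (2 *\<^sub>R x)"
    by (rule a_le)
  moreover have "a \<bullet> x \<le> a \<bullet> 0"
    using convex_cone_contains_0[OF K] by (rule a_le)
  ultimately have ax: "a \<bullet> x = 0"
    by simp
  then have dual: "a \<in> dual_cone K"
    using a_le unfolding dual_cone_def by simp
  obtain y where y: "y \<in> rel_interior K"
    using rel_interior_eq_empty[OF \<open>convex K\<close>] convex_cone_nonempty[OF K] by blast
  then have "y \<in> K" "0 < a \<bullet> y"
    using rel_interior_subset a(2)[OF y] ax by auto
  then have "a \<notin> perp K"
    unfolding perp_def by force
  moreover have "a \<in> perp F"
    using perp_if_dual_cone_vanishes_on_rel_interior[OF \<open>convex F\<close> \<open>F \<subseteq> K\<close> dual x ax] .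
  ultimately show ?thesis
    using that dual by blast
qed

lemma ex_subset_doubleton_if_unique:
  assumes "\<And>x y. x \<in> A \<Longrightarrow> y \<in> A \<Longrightarrow> x = y"
  shows "\<exists>p1 p2. A \<subseteq> {p1, p2}"
proof (cases "A = {}")
  case False
  then obtain p where "p \<in> A"
    by blast
  then have "A \<subseteq> {p, p}"
    using assms by blast
  then show ?thesis
    by blast
qed blast

lemma dual_cone_interpolation:
  assumes "finite E"
    and separating: "\<And>p. p \<in> E \<Longrightarrow> \<exists>h\<in>dual_cone G. 0 < h \<bullet> p \<and> (\<forall>q\<in>E - {p}. h \<bullet> q = 0)"
    and y: "\<forall>p\<in>E. 0 \<le> y \<bullet> p"
  shows "\<exists>u\<in>dual_cone G. y - u \<in> perp E"
proof -
  obtain h where h: "\<And>p. p \<in> E \<Longrightarrow> h p \<in> dual_cone G \<and> 0 < h p \<bullet> p \<and> (\<forall>q\<in>E - {p}. h p \<bullet> q = 0)"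
    using separating by metis
  define u where "u = (\<Sum>p\<in>E. ((y \<bullet> p) / (h p \<bullet> p)) *\<^sub>R h p)"
  have "0 \<le> u \<bullet> g" if "g \<in> G" for g
    unfolding u_def inner_sum_left using h y that
    by (intro sum_nonneg) (auto simp: dual_cone_def less_imp_le)
  then have "u \<in> dual_cone G"
    unfolding dual_cone_def by blast
  moreover have "u \<bullet> q = y \<bullet> q" if q: "q \<in> E" for q
  proof -
    have "h p \<bullet> q = 0" if "p \<in> E - {q}" for p
      using h[of p] q that by auto
    then have "u \<bullet> q = ((y \<bullet> q) / (h q \<bullet> q)) * (h q \<bullet> q)"
      unfolding u_def inner_sum_left using \<open>finite E\<close> q
      by (subst sum.remove[of _ q]) (auto intro!: sum.neutral)
    then show ?thesis
      using h[OF q] by simp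
  qed
  then have "y - u \<in> perp E"
    unfolding perp_def by (simp add: inner_diff_left)
  ultimately show ?thesis
    by blast
qed

section \<open>The curves and their cone\<close>

lemma vector_4 [simp]:
  "(vector [x, y, z, w] :: 'a::zero^4) $ 1 = x"
  "(vector [x, y, z, w] :: 'a::zero^4) $ 2 = y"
  "(vector [x, y, z, w] :: 'a::zero^4) $ 3 = z"
  "(vector [x, y, z, w] :: 'a::zero^4) $ 4 = w"
  unfolding vector_def by simp_all

lemma vec3_eq_iff: "(x :: 'a^3) = y \<longleftrightarrow> x $ 1 = y $ 1 \<and> x $ 2 = y $ 2 \<and> x $ 3 = y $ 3"
  by (simp add: vec_eq_iff forall_3)

lemma lift4_nth [simp]:
  "lift4 x $ 1 = x $ 1" "lift4 x $ 2 = x $ 2" "lift4 x $ 3 = x $ 3" "lift4 x $ 4 = 1"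
  by (simp_all add: lift4_def)

lemma inner_lift4: "y \<bullet> lift4 p = y $ 1 * p $ 1 + y $ 2 * p $ 2 + y $ 3 * p $ 3 + y $ 4"
  by (simp add: inner_vec_def sum_4)

lemma inj_lift4: "inj lift4"
  by (rule injI) (simp add: vec3_eq_iff flip: lift4_nth)

lemma lift4_eq_translation_linear:
  obtains L :: "real^3 \<Rightarrow> real^4" where "linear L" "lift4 = (\<lambda>x. axis 4 1 + L x)"
proof
  define L :: "real^3 \<Rightarrow> real^4" where "L x = vector [x $ 1, x $ 2, x $ 3, 0]" for x
  show "linear L"
    by (auto simp: linear_iff L_def vec_eq_iff forall_4)
  show "lift4 = (\<lambda>x. axis 4 1 + L x)"
    by (auto simp: L_def vec_eq_iff forall_4 axis_def)
qed

lemma convex_hull_lift4: "convex hull (lift4 ` S) = lift4 ` (convex hull S)"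
proof -
  obtain L where L: "linear L" "lift4 = (\<lambda>x. axis 4 1 + L x)"
    by (rule lift4_eq_translation_linear)
  have "lift4 ` A = (+) (axis 4 1) ` (L ` A)" for A
    unfolding L(2) by (simp add: image_image)
  then show ?thesis
    by (simp add: convex_hull_translation convex_hull_linear_image[OF L(1)])
qed

lemma continuous_on_lift4: "continuous_on S lift4"
proof -
  obtain L where L: "linear L" "lift4 = (\<lambda>x. axis 4 1 + L x)"
    by (rule lift4_eq_translation_linear)
  show ?thesis
    unfolding L(2) using L(1)
    by (intro continuous_intros linear_continuous_on) (simp add: linear_conv_bounded_linear)
qed

lemma continuous_on_vector3:
  assumes "continuous_on S f" "continuous_on S g" "continuous_on S h"
  shows "continuous_on S (\<lambda>t. vector [f t, g t, h t] :: real^3)"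
proof -
  have "(\<lambda>t. vector [f t, g t, h t] :: real^3) =
      (\<lambda>t. \<chi> i. if i = 1 then f t else if i = 2 then g t else h t)"
    by (auto simp: vec_eq_iff forall_3)
  moreover have "continuous_on S (\<lambda>t. if i = 1 then f t else if i = 2 then g t else h t)"
    for i :: 3
    using assms by (cases "i = 1"; cases "i = 2") auto
  ultimately show ?thesis
    by (simp only:) (rule continuous_on_vec_lambda)
qed

definition curve_points :: "(real^3) set" where
  "curve_points = curve_alpha ` {0..2*pi} \<union> curve_beta ` {0..2*pi} \<union> curve_gamma ` {0..pi}"

lemma setC_eq_convex_hull: "setC = convex hull curve_points"
  by (simp add: setC_def curve_points_def)

lemma compact_lift4_curve_points: "compact (lift4 ` curve_points)"
proof -
  have "continuous_on S curve_alpha" "continuous_on S curve_beta" "continuous_on S curve_gamma"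
    for S
    unfolding curve_alpha_def curve_beta_def curve_gamma_def
    by (intro continuous_on_vector3 continuous_intros)+
  then have "compact curve_points"
    unfolding curve_points_def by (intro compact_Un compact_continuous_image compact_Icc)
  then show ?thesis
    by (intro compact_continuous_image continuous_on_lift4)
qed

lemma cone_of_lift4_setC:
  "cone_of (lift4 ` setC) = convex_cone hull (lift4 ` curve_points)"
  unfolding cone_of_eq_conic_hull setC_eq_convex_hull convex_hull_lift4[symmetric]
  by (rule convex_cone_hull_separate_nonempty[symmetric]) (auto simp: curve_points_def)

definition circle_point :: "real \<Rightarrow> real \<Rightarrow> real^3" where
  "circle_point \<sigma> t = vector [cos t, sin t, \<sigma>]"

definition gamma_height :: "real \<Rightarrow> real" where
  "gamma_height t = 9/8 * cos t - 1/8 * cos (3 * t)"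

lemma circle_point_nth [simp]:
  "circle_point \<sigma> t $ 1 = cos t" "circle_point \<sigma> t $ 2 = sin t" "circle_point \<sigma> t $ 3 = \<sigma>"
  by (simp_all add: circle_point_def)

lemma curve_gamma_nth [simp]:
  "curve_gamma t $ 1 = 2 * cos (2 * t) - 1" "curve_gamma t $ 2 = 2 * sin (2 * t)"
  "curve_gamma t $ 3 = gamma_height t"
  by (simp_all add: curve_gamma_def gamma_height_def)

lemma gamma_height_0 [simp]: "gamma_height 0 = 1"
  and gamma_height_pi [simp]: "gamma_height pi = -1"
  by (simp_all add: gamma_height_def)

lemma curve_alpha_eq: "curve_alpha = circle_point 1"
  and curve_beta_eq: "curve_beta = circle_point (-1)"
  by (auto simp: curve_alpha_def curve_beta_def circle_point_def)

lemma circle_point_eq_iff: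
  "circle_point \<sigma> s = circle_point \<tau> t \<longleftrightarrow> \<sigma> = \<tau> \<and> cos s = cos t \<and> sin s = sin t"
  by (auto simp: vec3_eq_iff)

lemma curve_gamma_0: "curve_gamma 0 = circle_point 1 0"
  and curve_gamma_pi: "curve_gamma pi = circle_point (-1) 0"
  by (simp_all add: vec3_eq_iff)

lemma sin_treble: "sin (3 * t) = 3 * sin t - 4 * sin (t::real) ^ 3"
proof -
  have "sin (3 * t) = sin (2 * t + t)"
    by simp
  also have "\<dots> = 2 * sin t * cos t * cos t + (1 - 2 * sin t ^ 2) * sin t"
    by (simp only: sin_add sin_double cos_double_sin)
  also have "\<dots> = 3 * sin t - 4 * sin t ^ 3"
    using sin_cos_squared_add[of t] by algebra
  finally show ?thesis .
qed

lemma gamma_height_cos: "gamma_height t = (3 * cos t - cos t ^ 3) / 2"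
  unfolding gamma_height_def cos_treble_cos by (simp add: field_simps)

lemma one_minus_gamma_height: "1 - gamma_height t = (1 - cos t)\<^sup>2 * (2 + cos t) / 2"
  unfolding gamma_height_cos by (simp add: power2_eq_square power3_eq_cube field_simps)

lemma gamma_height_pi_minus: "gamma_height (pi - t) = - gamma_height t"
  by (simp add: gamma_height_def right_diff_distrib cos_diff)

lemma has_real_derivative_gamma_height:
  "(gamma_height has_real_derivative - 3/2 * sin t ^ 3) (at t)"
proof -
  have "(gamma_height has_real_derivative 9/8 * - sin t - 1/8 * (- sin (3 * t) * 3)) (at t)"
    unfolding gamma_height_def[abs_def] by (auto intro!: derivative_eq_intros)
  then show ?thesis
    by (rule DERIV_cong) (unfold sin_treble, simp add: algebra_simps)
qed

lemma gamma_height_strict_antimono: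
  assumes "0 \<le> s" "s < t" "t \<le> pi"
  shows "gamma_height t < gamma_height s"
proof -
  obtain z where z: "s < z" "z < t" and
    diff: "gamma_height t - gamma_height s = (t - s) * (- 3/2 * sin z ^ 3)"
    using MVT2[OF \<open>s < t\<close> has_real_derivative_gamma_height] by blast
  have "0 < sin z"
    using z assms by (intro sin_gt_zero) auto
  then have "0 < (t - s) * sin z ^ 3"
    using \<open>s < t\<close> by simp
  then show ?thesis
    using diff by simp
qed

lemma gamma_height_le_1: "gamma_height t \<le> 1"
proof -
  have "0 \<le> 2 + cos t"
    using cos_ge_minus_one[of t] by linarith
  then have "0 \<le> (1 - cos t)\<^sup>2 * (2 + cos t) / 2"
    by simp
  then show ?thesis
    using one_minus_gamma_height[of t] by linarith
qed

lemma abs_gamma_height_less_1: "0 < t \<Longrightarrow> t < pi \<Longrightarrow> \<bar>gamma_height t\<bar> < 1"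
  using gamma_height_strict_antimono[of 0 t] gamma_height_strict_antimono[of t pi] by auto

lemma gamma_height_inj:
  assumes "0 \<le> s" "s \<le> pi" "0 \<le> t" "t \<le> pi" "gamma_height s = gamma_height t"
  shows "s = t"
  using gamma_height_strict_antimono[of s t] gamma_height_strict_antimono[of t s] assms
  by (cases s t rule: linorder_cases) auto

lemma cos_eq_1_imp_eq_0:
  assumes "\<bar>x\<bar> < 2 * pi" "cos x = 1"
  shows "x = 0"
proof -
  obtain n :: int where n: "x = of_int n * 2 * pi"
    using assms(2) cos_one_2pi_int by blast
  then have "\<bar>of_int n\<bar> * (2 * pi) < 1 * (2 * pi)"
    using assms(1) by (simp add: abs_mult)
  then have "\<bar>of_int n :: real\<bar> < 1"
    using pi_gt_zero by (simp only: mult_less_cancel_right)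
  then show ?thesis
    using n by (simp flip: of_int_abs)
qed

lemma cos_sin_eq_if_cos_diff_eq_1:
  fixes a b :: real
  assumes "cos (a - b) = 1"
  shows "cos a = cos b \<and> sin a = sin b"
proof -
  have "(cos a - cos b)\<^sup>2 + (sin a - sin b)\<^sup>2 = 2 - 2 * cos (a - b)"
    using sin_cos_squared_add3[of a] sin_cos_squared_add3[of b]
    by (simp add: cos_diff power2_eq_square algebra_simps)
  then show ?thesis
    using assms by (simp add: sum_power2_eq_zero_iff)
qed

lemma polar_coordinates:
  fixes x y :: real
  obtains \<theta> where "x = sqrt (x\<^sup>2 + y\<^sup>2) * cos \<theta>" "y = sqrt (x\<^sup>2 + y\<^sup>2) * sin \<theta>"
    "0 \<le> \<theta>" "\<theta> < 2 * pi"
proof (cases "x = 0 \<and> y = 0")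
  case True
  then show ?thesis
    using that[of 0] by simp
next
  case False
  define r where "r = sqrt (x\<^sup>2 + y\<^sup>2)"
  have "0 < x\<^sup>2 + y\<^sup>2"
    using False by (simp add: sum_power2_gt_zero_iff)
  then have "0 < r"
    by (simp add: r_def)
  have "r\<^sup>2 = x\<^sup>2 + y\<^sup>2"
    by (simp add: r_def)
  moreover have "(x / r)\<^sup>2 + (y / r)\<^sup>2 = (x\<^sup>2 + y\<^sup>2) / r\<^sup>2"
    by (simp add: power_divide add_divide_distrib)
  ultimately have "(x / r)\<^sup>2 + (y / r)\<^sup>2 = 1"
    using False by simp
  then obtain \<theta> where \<theta>: "0 \<le> \<theta>" "\<theta> < 2 * pi" "x / r = cos \<theta>" "y / r = sin \<theta>"
    by (rule sincos_total_2pi)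
  then have "x = r * cos \<theta>" "y = r * sin \<theta>"
    using \<open>0 < r\<close> by (auto simp: field_simps)
  then show ?thesis
    using that \<theta>(1,2) unfolding r_def by blast
qed

lemma polar_coordinates_opposite:
  fixes x y :: real
  obtains \<theta> where "x = - sqrt (x\<^sup>2 + y\<^sup>2) * cos \<theta>" "y = - sqrt (x\<^sup>2 + y\<^sup>2) * sin \<theta>"
    "0 \<le> \<theta>" "\<theta> < 2 * pi"
proof -
  have "(- x)\<^sup>2 + (- y)\<^sup>2 = x\<^sup>2 + y\<^sup>2"
    by simp
  then obtain \<theta> where \<theta>: "- x = sqrt (x\<^sup>2 + y\<^sup>2) * cos \<theta>" "- y = sqrt (x\<^sup>2 + y\<^sup>2) * sin \<theta>"
    "0 \<le> \<theta>" "\<theta> < 2 * pi"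
    using polar_coordinates[of "- x" "- y"] by metis
  show ?thesis
    by (rule that[of \<theta>]) (use \<theta> in linarith)+
qed

lemma circle_point_in_curve_points:
  assumes "\<sigma> \<in> {1, -1}"
  shows "circle_point \<sigma> t \<in> curve_points"
proof -
  obtain s where s: "0 \<le> s" "s < 2 * pi" "cos t = cos s" "sin t = sin s"
    by (rule sincos_total_2pi[OF sin_cos_squared_add2[of t]])
  then have "circle_point \<sigma> t = circle_point \<sigma> s"
    by (simp add: circle_point_eq_iff)
  then show ?thesis
    using assms s(1,2) unfolding curve_points_def curve_alpha_eq curve_beta_eq by auto
qed

lemma curve_gamma_in_curve_points: "0 \<le> t \<Longrightarrow> t \<le> pi \<Longrightarrow> curve_gamma t \<in> curve_points"
  unfolding curve_points_def by auto

lemma curve_points_cases: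
  assumes "q \<in> curve_points"
  obtains (circle) \<sigma> t where "\<sigma> \<in> {1, -1}" "q = circle_point \<sigma> t"
    | (gamma) t where "0 < t" "t < pi" "q = curve_gamma t"
proof -
  consider (top) t where "q = circle_point 1 t" | (bottom) t where "q = circle_point (-1) t"
    | (curve) t where "0 \<le> t" "t \<le> pi" "q = curve_gamma t"
    using assms unfolding curve_points_def curve_alpha_eq curve_beta_eq
    by (elim UnE imageE) (auto simp del: circle_point_nth)
  then show ?thesis
  proof cases
    case (top t)
    then show ?thesis
      by (intro that(1)[of 1 t]) simp_all
  next
    case (bottom t)
    then show ?thesis
      by (intro that(1)[of "-1" t]) simp_all
  next
    case (curve t)
    then consider "t = 0" | "t = pi" | "0 < t" "t < pi"
      by fastforce
    then show ?thesis
    proof cases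
      case 1
      then show ?thesis
        using curve(3) curve_gamma_0 by (intro that(1)[of 1 0]) simp_all
    next
      case 2
      then show ?thesis
        using curve(3) curve_gamma_pi by (intro that(1)[of "-1" 0]) simp_all
    next
      case 3
      then show ?thesis
        using curve(3) by (intro that(2)[of t])
    qed
  qed
qed

lemma curve_point_in_plane:
  assumes "q \<in> curve_points" "\<sigma> \<in> {1, -1}" "q $ 3 = \<sigma>"
  obtains t where "q = circle_point \<sigma> t"
  using assms(1)
proof (cases rule: curve_points_cases)
  case (gamma t)
  then show ?thesis
    using assms(2,3) abs_gamma_height_less_1[of t] by auto
qed (use assms that in auto)

lemma curve_points_at_height_unique:
  assumes z: "z \<notin> {1, -1}" and q: "q \<in> curve_points" "q $ 3 = z" and q': "q' \<in> curve_points" "q' $ 3 = z"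
  shows "q = q'"
proof -
  have on_gamma: "\<exists>t. 0 < t \<and> t < pi \<and> x = curve_gamma t" if "x \<in> curve_points" "x $ 3 = z" for x
    using that(1)
  proof (cases rule: curve_points_cases)
    case (circle \<sigma> t)
    then show ?thesis
      using that(2) z by auto
  qed blast
  obtain t where "0 < t" "t < pi" "q = curve_gamma t"
    using on_gamma[OF q] by blast
  moreover obtain t' where "0 < t'" "t' < pi" "q' = curve_gamma t'"
    using on_gamma[OF q'] by blast
  ultimately show ?thesis
    using gamma_height_inj[of t t'] q(2) q'(2) by auto
qed

section \<open>Exposed points\<close>

text \<open>At \<open>\<gamma>(t)\<close> the functional \<open>cos \<theta> x\<^sub>1 + sin \<theta> x\<^sub>2\<close>, whose maximum on the
  circles is \<open>1\<close>, takes the value \<open>2 cos (2t - \<theta>) - cos \<theta>\<close>. Although \<open>\<gamma>\<close> approaches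
  the plane \<open>x\<^sub>3 = 1\<close> to fourth order at \<open>t = 0\<close>, as
  \<open>1 - \<gamma>\<^sub>3(t) = (1 - cos t)\<^sup>2 (2 + cos t) / 2\<close>, the excess over \<open>1\<close> is dominated by a
  multiple of this gap, so tilting the functional by a multiple of \<open>x\<^sub>3\<close> exposes the circle
  point at angle \<open>\<theta>\<close>.\<close>

lemma cos_double_shift_diff_le:
  fixes t \<theta> :: real
  assumes "0 \<le> t"
  shows "cos (2 * t - \<theta>) - cos \<theta> \<le> 2 * t"
proof -
  have "cos (2 * t - \<theta>) - cos \<theta> = 2 * sin t * sin (\<theta> - t)"
    using cos_diff_cos[of "2 * t - \<theta>" \<theta>] by (simp add: diff_divide_distrib)
  moreover have "\<bar>sin t * sin (\<theta> - t)\<bar> \<le> \<bar>t\<bar> * 1"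
    unfolding abs_mult by (intro mult_mono abs_sin_x_le_abs_x abs_sin_le_one) auto
  ultimately show ?thesis
    using assms by (simp add: abs_le_iff)
qed

lemma one_minus_gamma_height_ge:
  assumes "0 \<le> d" "d \<le> t" "t \<le> pi"
  shows "(1 - cos d)\<^sup>2 / 2 \<le> 1 - gamma_height t"
proof -
  have "cos t \<le> cos d"
    using cos_monotone_0_pi_le assms by blast
  then have "(1 - cos d)\<^sup>2 \<le> (1 - cos t)\<^sup>2"
    by (intro power_mono) simp_all
  also have "\<dots> \<le> (1 - cos t)\<^sup>2 * (2 + cos t)"
  proof -
    have "1 \<le> 2 + cos t"
      using cos_ge_minus_one[of t] by linarith
    then show ?thesis
      using mult_left_mono[of 1 "2 + cos t" "(1 - cos t)\<^sup>2"] by simp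
  qed
  finally show ?thesis
    unfolding one_minus_gamma_height by (intro divide_right_mono) simp_all
qed

lemma gamma_contact_bound_top:
  obtains l :: real where "0 \<le> l"
    "\<And>t. 0 \<le> t \<Longrightarrow> t \<le> pi \<Longrightarrow> 2 * cos (2 * t - \<theta>) - cos \<theta> - 1 \<le> l * (1 - gamma_height t)"
proof (cases "cos \<theta> = 1")
  case True
  then have "sin \<theta> = 0"
    using sin_cos_squared_add[of \<theta>] by simp
  then have "2 * cos (2 * t - \<theta>) - cos \<theta> - 1 \<le> 0 * (1 - gamma_height t)" for t
    using True by (simp add: cos_diff)
  then show ?thesis
    using that[of 0] by blast
next
  case False
  then have "cos \<theta> < 1"
    using cos_le_one[of \<theta>] by (simp add: less_le)
  define d where "d = (1 - cos \<theta>) / 4"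
  have "4 * d = 1 - cos \<theta>"
    unfolding d_def by simp
  then have "0 < d" "d < 1"
    using \<open>cos \<theta> < 1\<close> cos_ge_minus_one[of \<theta>] by linarith+
  define m where "m = (1 - cos d)\<^sup>2 / 2"
  have "cos d < 1"
    using cos_monotone_0_pi[of 0 d] \<open>0 < d\<close> \<open>d < 1\<close> pi_gt3 by simp
  then have "0 < m"
    unfolding m_def by simp
  show ?thesis
  proof (rule that[of "2 / m"])
    show "0 \<le> 2 / m"
      using \<open>0 < m\<close> by simp
    fix t :: real
    assume t: "0 \<le> t" "t \<le> pi"
    show "2 * cos (2 * t - \<theta>) - cos \<theta> - 1 \<le> 2 / m * (1 - gamma_height t)"
    proof (cases "t \<le> d")
      case True
      then have "2 * cos (2 * t - \<theta>) - cos \<theta> - 1 \<le> 0"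
        using cos_double_shift_diff_le[OF t(1), of \<theta>] \<open>4 * d = 1 - cos \<theta>\<close> by linarith
      moreover have "0 \<le> 2 / m * (1 - gamma_height t)"
        using \<open>0 < m\<close> gamma_height_le_1[of t] by simp
      ultimately show ?thesis
        by linarith
    next
      case False
      then have "m \<le> 1 - gamma_height t"
        unfolding m_def using one_minus_gamma_height_ge[of d t] \<open>0 < d\<close> t by simp
      then have "2 \<le> 2 / m * (1 - gamma_height t)"
        using \<open>0 < m\<close> by (simp add: field_simps)
      then show ?thesis
        using cos_le_one[of "2 * t - \<theta>"] cos_ge_minus_one[of \<theta>] by linarith
    qed
  qed
qed

lemma gamma_contact_bound:
  assumes "\<sigma> \<in> {1, -1}"
  obtains l :: real where "0 \<le> l"
    "\<And>t. 0 \<le> t \<Longrightarrow> t \<le> pi \<Longrightarrow> 2 * cos (2 * t - \<theta>) - cos \<theta> - 1 \<le> l * (1 - \<sigma> * gamma_height t)"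
proof (cases "\<sigma> = 1")
  case True
  obtain l :: real where "0 \<le> l"
    "\<And>t. 0 \<le> t \<Longrightarrow> t \<le> pi \<Longrightarrow> 2 * cos (2 * t - \<theta>) - cos \<theta> - 1 \<le> l * (1 - gamma_height t)"
    using gamma_contact_bound_top[of \<theta>] by blast
  then show ?thesis
    using that[of l] True by simp
next
  case False
  then have "\<sigma> = -1"
    using assms by simp
  obtain l :: real where l: "0 \<le> l"
    "\<And>t. 0 \<le> t \<Longrightarrow> t \<le> pi \<Longrightarrow> 2 * cos (2 * t - - \<theta>) - cos (- \<theta>) - 1 \<le> l * (1 - gamma_height t)"
    using gamma_contact_bound_top[of "- \<theta>"] by blast
  have "2 * cos (2 * t - \<theta>) - cos \<theta> - 1 \<le> l * (1 + gamma_height t)" if "0 \<le> t" "t \<le> pi" for t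
  proof -
    have "cos (2 * (pi - t) + \<theta>) = cos (2 * pi - (2 * t - \<theta>))"
      by (simp add: algebra_simps)
    also have "\<dots> = cos (2 * t - \<theta>)"
      by (rule cos_2pi_minus)
    finally have eq: "cos (2 * (pi - t) + \<theta>) = cos (2 * t - \<theta>)" .
    have "2 * cos (2 * (pi - t) + \<theta>) - cos \<theta> - 1 \<le> l * (1 - gamma_height (pi - t))"
      using l(2)[of "pi - t"] that by simp
    then show ?thesis
      unfolding eq gamma_height_pi_minus by simp
  qed
  then show ?thesis
    using that[of l] l(1) \<open>\<sigma> = -1\<close> by simp
qed

definition circle_exposer :: "real \<Rightarrow> real \<Rightarrow> real \<Rightarrow> real^4" where
  "circle_exposer \<sigma> \<theta> l = vector [- cos \<theta>, - sin \<theta>, - \<sigma> * l, 1 + l]"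

lemma inner_circle_exposer_lift4:
  "circle_exposer \<sigma> \<theta> l \<bullet> lift4 q = 1 + l - (cos \<theta> * q $ 1 + sin \<theta> * q $ 2 + \<sigma> * l * q $ 3)"
  by (simp add: circle_exposer_def inner_lift4)

lemma circle_exposer_on_curve_points:
  assumes \<sigma>: "\<sigma> \<in> {1, -1}" and "0 \<le> l0"
    and bound: "\<And>t. 0 \<le> t \<Longrightarrow> t \<le> pi \<Longrightarrow>
      2 * cos (2 * t - \<theta>) - cos \<theta> - 1 \<le> l0 * (1 - \<sigma> * gamma_height t)"
    and q: "q \<in> curve_points"
  shows "0 \<le> circle_exposer \<sigma> \<theta> (l0 + 1) \<bullet> lift4 q \<and>
    (circle_exposer \<sigma> \<theta> (l0 + 1) \<bullet> lift4 q = 0 \<longrightarrow> q = circle_point \<sigma> \<theta>)"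
  using q
proof (cases rule: curve_points_cases)
  case (circle \<tau> t)
  have h: "circle_exposer \<sigma> \<theta> (l0 + 1) \<bullet> lift4 q = (1 - cos (\<theta> - t)) + (1 - \<sigma> * \<tau>) * (l0 + 1)"
    unfolding inner_circle_exposer_lift4 circle by (simp add: cos_diff algebra_simps)
  have "cos (\<theta> - t) \<le> 1"
    by simp
  show ?thesis
  proof (cases "\<tau> = \<sigma>")
    case True
    then have "\<sigma> * \<tau> = 1"
      using \<sigma> by auto
    moreover have "cos (\<theta> - t) = 1 \<Longrightarrow> q = circle_point \<sigma> \<theta>"
      using cos_sin_eq_if_cos_diff_eq_1[of \<theta> t] circle True by (simp add: circle_point_eq_iff)
    ultimately show ?thesis
      using h \<open>cos (\<theta> - t) \<le> 1\<close> by auto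
  next
    case False
    then have "\<sigma> * \<tau> = -1"
      using \<sigma> circle(1) by auto
    then have "circle_exposer \<sigma> \<theta> (l0 + 1) \<bullet> lift4 q = (1 - cos (\<theta> - t)) + 2 * (l0 + 1)"
      using h by simp
    then have "0 < circle_exposer \<sigma> \<theta> (l0 + 1) \<bullet> lift4 q"
      using \<open>cos (\<theta> - t) \<le> 1\<close> \<open>0 \<le> l0\<close> by argo
    then show ?thesis
      by simp
  qed
next
  case (gamma t)
  have "\<sigma> * gamma_height t < 1"
    using abs_gamma_height_less_1[of t] gamma \<sigma> by auto
  have "circle_exposer \<sigma> \<theta> (l0 + 1) \<bullet> lift4 q =
      l0 + 2 - (2 * cos (2 * t - \<theta>) - cos \<theta>) - \<sigma> * (l0 + 1) * gamma_height t"
    unfolding inner_circle_exposer_lift4 gamma by (simp add: cos_diff algebra_simps)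
  also have "\<dots> \<ge> 1 - \<sigma> * gamma_height t"
    using bound[of t] gamma by (simp add: algebra_simps)
  finally show ?thesis
    using \<open>\<sigma> * gamma_height t < 1\<close> by simp
qed

lemma circle_point_exposed:
  assumes \<sigma>: "\<sigma> \<in> {1, -1}"
  obtains l where "circle_exposer \<sigma> \<theta> l \<in> dual_cone (lift4 ` curve_points)"
    "\<And>q. q \<in> curve_points \<Longrightarrow> circle_exposer \<sigma> \<theta> l \<bullet> lift4 q = 0 \<Longrightarrow> q = circle_point \<sigma> \<theta>"
proof -
  obtain l0 :: real where l0: "0 \<le> l0"
    "\<And>t. 0 \<le> t \<Longrightarrow> t \<le> pi \<Longrightarrow> 2 * cos (2 * t - \<theta>) - cos \<theta> - 1 \<le> l0 * (1 - \<sigma> * gamma_height t)"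
    using gamma_contact_bound[OF \<sigma>, of \<theta>] by blast
  note h = circle_exposer_on_curve_points[OF \<sigma> l0]
  show ?thesis
  proof (rule that[of "l0 + 1"])
    show "circle_exposer \<sigma> \<theta> (l0 + 1) \<in> dual_cone (lift4 ` curve_points)"
      using h unfolding dual_cone_def by blast
    show "q = circle_point \<sigma> \<theta>"
      if "q \<in> curve_points" "circle_exposer \<sigma> \<theta> (l0 + 1) \<bullet> lift4 q = 0" for q
      using h that by blast
  qed
qed

lemma gamma_point_exposed:
  assumes t0: "0 < t0" "t0 < pi"
  obtains h where "h \<in> dual_cone (lift4 ` curve_points)"
    "\<And>q. q \<in> curve_points \<Longrightarrow> h \<bullet> lift4 q = 0 \<longleftrightarrow> q = curve_gamma t0"
proof -
  \<comment> \<open>The first two coordinates of \<open>\<gamma>\<close> run on the circle of radius \<open>2\<close> about \<open>(-1, 0)\<close>,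
    which encloses the unit circle; \<open>h\<close> is its tangent functional at \<open>\<gamma>(t0)\<close>.\<close>
  define h :: "real^4" where "h = vector [- cos (2 * t0), - sin (2 * t0), 0, 2 - cos (2 * t0)]"
  have hq: "h \<bullet> lift4 q = 2 - cos (2 * t0) - (cos (2 * t0) * q $ 1 + sin (2 * t0) * q $ 2)" for q
    by (simp add: h_def inner_lift4)
  have "cos (2 * t0) \<noteq> 1"
    using cos_eq_1_imp_eq_0[of "2 * t0"] t0 by auto
  then have "cos (2 * t0) < 1"
    using cos_le_one[of "2 * t0"] by linarith
  have h: "0 \<le> h \<bullet> lift4 q \<and> (h \<bullet> lift4 q = 0 \<longleftrightarrow> q = curve_gamma t0)" if "q \<in> curve_points" for q
    using that
  proof (cases rule: curve_points_cases)
    case (circle \<sigma> t)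
    have "h \<bullet> lift4 q = 2 - cos (2 * t0) - cos (2 * t0 - t)"
      unfolding hq circle by (simp add: cos_diff)
    moreover have "cos (2 * t0 - t) \<le> 1"
      by simp
    ultimately have "0 < h \<bullet> lift4 q"
      using \<open>cos (2 * t0) < 1\<close> by linarith
    moreover have "q \<noteq> curve_gamma t0"
      using circle abs_gamma_height_less_1[of t0] t0 by (auto simp: vec3_eq_iff)
    ultimately show ?thesis
      by simp
  next
    case (gamma t)
    have "h \<bullet> lift4 q = 2 - 2 * cos (2 * t - 2 * t0)"
      unfolding hq gamma by (simp add: cos_diff algebra_simps)
    moreover have "cos (2 * t - 2 * t0) = 1 \<longleftrightarrow> t = t0"
      using cos_eq_1_imp_eq_0[of "2 * t - 2 * t0"] gamma t0 by auto
    moreover have "curve_gamma t = curve_gamma t0 \<Longrightarrow> t = t0"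
      using gamma_height_inj[of t t0] gamma t0 by (auto simp: vec3_eq_iff)
    ultimately show ?thesis
      using cos_le_one[of "2 * t - 2 * t0"] gamma by auto
  qed
  have "h \<in> dual_cone (lift4 ` curve_points)"
    using h unfolding dual_cone_def by blast
  then show ?thesis
    using that h by blast
qed

lemma curve_point_exposed:
  assumes "p \<in> curve_points"
  obtains h where "h \<in> dual_cone (lift4 ` curve_points)"
    "\<And>q. q \<in> curve_points \<Longrightarrow> h \<bullet> lift4 q = 0 \<longleftrightarrow> q = p"
  using assms
proof (cases rule: curve_points_cases)
  case (circle \<sigma> t)
  obtain l where l: "circle_exposer \<sigma> t l \<in> dual_cone (lift4 ` curve_points)"
    "\<And>q. q \<in> curve_points \<Longrightarrow> circle_exposer \<sigma> t l \<bullet> lift4 q = 0 \<Longrightarrow> q = circle_point \<sigma> t"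
    using circle_point_exposed[OF circle(1), of t] by blast
  have "circle_exposer \<sigma> t l \<bullet> lift4 p = 0"
    using circle by (auto simp: inner_circle_exposer_lift4 algebra_simps)
  then show ?thesis
    using that l circle(2) by blast
next
  case (gamma t)
  obtain h where "h \<in> dual_cone (lift4 ` curve_points)"
    "\<And>q. q \<in> curve_points \<Longrightarrow> h \<bullet> lift4 q = 0 \<longleftrightarrow> q = curve_gamma t"
    using gamma_point_exposed[OF gamma(1,2)] by blast
  then show ?thesis
    using that gamma(3) by blast
qed

section \<open>Zeros of supporting functionals\<close>

lemma sin_add_int_pi: "sin (x + of_int k * pi) = (if even k then 1 else -1) * sin x"
  by (simp add: sin_add mult.commute[of _ pi])

lemma int_pi_shift_to_window:
  fixes x :: real
  obtains k :: int where "- (pi / 2) \<le> x - of_int k * pi" "x - of_int k * pi \<le> pi / 2"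
proof
  define k where "k = \<lfloor>x / pi + 1 / 2\<rfloor>"
  have "of_int k \<le> x / pi + 1 / 2" "x / pi + 1 / 2 < of_int k + 1"
    unfolding k_def by simp_all
  then have "of_int k * pi \<le> x + pi / 2" "x + pi / 2 < (of_int k + 1) * pi"
    using pi_gt_zero by (simp_all add: field_simps)
  then show "- (pi / 2) \<le> x - of_int k * pi" "x - of_int k * pi \<le> pi / 2"
    by (simp_all add: algebra_simps)
qed

text \<open>The zeros of \<open>f(v) = sin (3v + p) + 5 sin v\<close> are unique modulo \<open>\<pi>\<close>: \<open>f\<close> changes
  sign under \<open>v \<mapsto> v + \<pi>\<close>, and at a zero \<open>|sin v| \<le> 1/5\<close>, so that between two zeros in
  \<open>[-\<pi>/2, \<pi>/2]\<close> the derivative \<open>3 cos (3v + p) + 5 cos v\<close> would be positive.\<close>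

lemma sin3_5_no_two_zeros_in_window:
  assumes ab: "- (pi / 2) \<le> a" "a < b" "b \<le> pi / 2"
    and zeros: "sin (3 * a + p) + 5 * sin a = 0" "sin (3 * b + p) + 5 * sin b = 0"
  shows False
proof -
  have small: "\<bar>sin w\<bar> \<le> 1 / 5" if "sin (3 * w + p) + 5 * sin w = 0" for w
  proof -
    have "5 * \<bar>sin w\<bar> = \<bar>sin (3 * w + p)\<bar>"
      using that by (simp add: eq_neg_iff_add_eq_0 add.commute abs_mult)
    moreover have "\<bar>sin (3 * w + p)\<bar> \<le> 1"
      by (rule abs_sin_le_one)
    ultimately show ?thesis
      by linarith
  qed
  have "((\<lambda>v. sin (3 * v + p) + 5 * sin v) has_real_derivative 3 * cos (3 * v + p) + 5 * cos v) (at v)"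
    for v
    by (auto intro!: derivative_eq_intros)
  then obtain z where z: "a < z" "z < b" and "0 = (b - a) * (3 * cos (3 * z + p) + 5 * cos z)"
    using MVT2[OF \<open>a < b\<close>, of "\<lambda>v. sin (3 * v + p) + 5 * sin v" "\<lambda>v. 3 * cos (3 * v + p) + 5 * cos v"]
      zeros by auto
  then have crit: "3 * cos (3 * z + p) + 5 * cos z = 0"
    using \<open>a < b\<close> by simp
  have "sin a \<le> sin z" "sin z \<le> sin b"
    using z ab by (auto intro!: sin_monotone_2pi_le)
  then have "\<bar>sin z\<bar> \<le> 1 / 5"
    using small[OF zeros(1)] small[OF zeros(2)] by auto
  then have "(sin z)\<^sup>2 \<le> (1 / 5)\<^sup>2"
    by (metis abs_le_square_iff abs_of_nonneg zero_le_divide_1_iff zero_le_numeral power2_abs)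
  then have "(9 / 10)\<^sup>2 \<le> (cos z)\<^sup>2"
    by (simp add: cos_squared_eq power_divide)
  moreover have "0 \<le> cos z"
    using z ab by (intro cos_ge_zero) auto
  ultimately have "9 / 10 \<le> cos z"
    using power2_le_imp_le by blast
  then show False
    using crit cos_ge_minus_one[of "3 * z + p"] by linarith
qed

lemma sin3_5_zeros_unique:
  assumes "\<bar>v - w\<bar> < pi" "sin (3 * v + p) + 5 * sin v = 0" "sin (3 * w + p) + 5 * sin w = 0"
  shows "v = w"
proof -
  have shift: "sin (3 * (x - of_int k * pi) + p) + 5 * sin (x - of_int k * pi) = 0"
    if "sin (3 * x + p) + 5 * sin x = 0" for x k
  proof -
    have "3 * (x - of_int k * pi) + p = (3 * x + p) + of_int (- 3 * k) * pi"
      "x - of_int k * pi = x + of_int (- k) * pi"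
      by (simp_all add: algebra_simps)
    then show ?thesis
      using that by (simp only: sin_add_int_pi) (simp add: algebra_simps)
  qed
  obtain j :: int where j: "- (pi / 2) \<le> v - of_int j * pi" "v - of_int j * pi \<le> pi / 2"
    by (rule int_pi_shift_to_window)
  obtain k :: int where k: "- (pi / 2) \<le> w - of_int k * pi" "w - of_int k * pi \<le> pi / 2"
    by (rule int_pi_shift_to_window)
  have "v - of_int j * pi = w - of_int k * pi"
    using sin3_5_no_two_zeros_in_window[OF j(1) _ k(2) shift[OF assms(2)] shift[OF assms(3)]]
      sin3_5_no_two_zeros_in_window[OF k(1) _ j(2) shift[OF assms(3)] shift[OF assms(2)]]
    by fastforce
  then have "\<bar>of_int (j - k) * pi\<bar> < 1 * pi"
    using assms(1) by (simp add: algebra_simps)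
  then have "j = k"
    by (simp add: abs_mult)
  then show ?thesis
    using \<open>v - of_int j * pi = w - of_int k * pi\<close> by simp
qed

lemma sin3_cos3_zeros_unique:
  assumes "a1 \<noteq> 0 \<or> a2 \<noteq> 0" "\<bar>t1 - t2\<bar> < pi"
    and "a1 * (sin (3 * t1) + 5 * sin t1) = a2 * (cos (3 * t1) + 5 * cos t1)"
    and "a1 * (sin (3 * t2) + 5 * sin t2) = a2 * (cos (3 * t2) + 5 * cos t2)"
  shows "t1 = t2"
proof -
  define r where "r = sqrt (a1\<^sup>2 + a2\<^sup>2)"
  obtain p where p: "a1 = r * cos p" "a2 = r * sin p"
    unfolding r_def by (rule polar_coordinates)
  have "r \<noteq> 0"
    using assms(1) by (simp add: r_def sum_power2_eq_zero_iff)
  have "a1 * (sin (3 * t) + 5 * sin t) - a2 * (cos (3 * t) + 5 * cos t) =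
      r * (sin (3 * t - p) + 5 * sin (t - p))" for t
    unfolding p by (simp add: sin_diff algebra_simps)
  moreover have "3 * (t - p) + 2 * p = 3 * t - p" for t
    by simp
  ultimately have "sin (3 * (t1 - p) + 2 * p) + 5 * sin (t1 - p) = 0"
    "sin (3 * (t2 - p) + 2 * p) + 5 * sin (t2 - p) = 0"
    using assms(3,4) \<open>r \<noteq> 0\<close> by (metis diff_self mult_eq_0_iff)+
  then show ?thesis
    using sin3_5_zeros_unique[of "t1 - p" "t2 - p" "2 * p"] assms(2) by simp
qed

lemma sin3_cos3_derivative_identity:
  fixes a1 a2 :: real
  shows "(-2 * a2 * sin (2 * t) - 2 * a1 * cos (2 * t)) * sin t - 3 * (a2 * cos (2 * t) - a1 * sin (2 * t)) * cos t
    = (a1 * (sin (3 * t) + 5 * sin t) - a2 * (cos (3 * t) + 5 * cos t)) / 2"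
proof -
  have "sin t ^ 2 + cos t ^ 2 = 1"
    by simp
  then show ?thesis
    unfolding sin_double cos_double_cos sin_treble cos_treble_cos by algebra
qed

text \<open>Where \<open>t \<mapsto> a \<bullet> lift4 (\<gamma> t)\<close> has an interior minimum, \<open>a\<^sub>2 cos 2t - a\<^sub>1 sin 2t\<close>
  equals a fixed multiple of \<open>sin\<^sup>3 t\<close>. Dividing by \<open>sin\<^sup>3 t\<close> and applying Rolle twice, three
  such points would produce two zeros of the function of \<open>sin3_cos3_zeros_unique\<close> in \<open>(0, \<pi>)\<close>.\<close>

lemma no_three_critical_points:
  assumes nz: "a1 \<noteq> 0 \<or> a2 \<noteq> 0" and xyz: "0 < x" "x < y" "y < z" "z < pi"
    and crit: "\<And>t. t \<in> {x, y, z} \<Longrightarrow> a2 * cos (2 * t) - a1 * sin (2 * t) = c * sin t ^ 3"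
  shows False
proof -
  define P where "P t = a2 * cos (2 * t) - a1 * sin (2 * t)" for t
  define P' where "P' t = -2 * a2 * sin (2 * t) - 2 * a1 * cos (2 * t)" for t
  define \<Psi>' where "\<Psi>' t = (P' t * sin t ^ 3 - P t * (3 * sin t ^ 2 * cos t)) / (sin t ^ 3)\<^sup>2" for t
  have sin_pos: "0 < sin t" if "0 < t" "t < pi" for t
    using that by (rule sin_gt_zero)
  have \<Psi>: "((\<lambda>t. P t / sin t ^ 3) has_real_derivative \<Psi>' t) (at t)" if "0 < t" "t < pi" for t
    using sin_pos[OF that] unfolding P_def P'_def \<Psi>'_def
    by (auto intro!: derivative_eq_intros simp: algebra_simps)
  have \<Psi>_crit: "P t / sin t ^ 3 = c" if "t \<in> {x, y, z}" for t
    using crit[OF that] sin_pos[of t] that xyz unfolding P_def by auto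
  have zero: "a1 * (sin (3 * t) + 5 * sin t) = a2 * (cos (3 * t) + 5 * cos t)"
    if "0 < t" "t < pi" "\<Psi>' t = 0" for t
  proof -
    have "sin t ^ 2 * (P' t * sin t - 3 * P t * cos t) = 0"
      using that(3) sin_pos[OF that(1,2)] unfolding \<Psi>'_def
      by (simp add: power2_eq_square power3_eq_cube algebra_simps)
    then show ?thesis
      using sin_pos[OF that(1,2)] sin3_cos3_derivative_identity[of a2 t a1]
      unfolding P_def P'_def by simp
  qed
  obtain z1 where z1: "x < z1" "z1 < y" "\<Psi>' z1 = 0"
    using MVT2[OF \<open>x < y\<close>, of "\<lambda>t. P t / sin t ^ 3" \<Psi>'] \<Psi> \<Psi>_crit xyz by auto
  obtain z2 where z2: "y < z2" "z2 < z" "\<Psi>' z2 = 0"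
    using MVT2[OF \<open>y < z\<close>, of "\<lambda>t. P t / sin t ^ 3" \<Psi>'] \<Psi> \<Psi>_crit xyz by auto
  have "z1 = z2"
    using sin3_cos3_zeros_unique[OF nz, of z1 z2] zero z1 z2 xyz by auto
  then show False
    using z1 z2 by simp
qed

lemma has_real_derivative_gamma_value:
  "((\<lambda>t. a \<bullet> lift4 (curve_gamma t)) has_real_derivative
     4 * (a $ 2 * cos (2 * t) - a $ 1 * sin (2 * t)) - 3/2 * a $ 3 * sin t ^ 3) (at t)"
  unfolding inner_lift4 curve_gamma_nth
  by (auto intro!: derivative_eq_intros has_real_derivative_gamma_height[THEN DERIV_chain2]
      simp: algebra_simps)

lemma gamma_zero_unique:
  fixes a :: "real^4"
  assumes nz: "a $ 1 \<noteq> 0 \<or> a $ 2 \<noteq> 0"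
    and nonneg: "\<And>t. 0 \<le> t \<Longrightarrow> t \<le> pi \<Longrightarrow> 0 \<le> a \<bullet> lift4 (curve_gamma t)"
    and t: "0 < t1" "t1 < pi" "0 < t2" "t2 < pi"
    and zeros: "a \<bullet> lift4 (curve_gamma t1) = 0" "a \<bullet> lift4 (curve_gamma t2) = 0"
  shows "t1 = t2"
proof -
  let ?g = "\<lambda>t. a \<bullet> lift4 (curve_gamma t)"
  let ?g' = "\<lambda>t. 4 * (a $ 2 * cos (2 * t) - a $ 1 * sin (2 * t)) - 3/2 * a $ 3 * sin t ^ 3"
  have crit: "a $ 2 * cos (2 * t) - a $ 1 * sin (2 * t) = 3/8 * a $ 3 * sin t ^ 3" if "?g' t = 0" for t
    using that by simp
  have min: "?g' t = 0" if "0 < t" "t < pi" "?g t = 0" for t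
  proof (rule DERIV_local_min[OF has_real_derivative_gamma_value])
    show "0 < min t (pi - t)"
      using that by simp
    show "\<forall>s. \<bar>t - s\<bar> < min t (pi - t) \<longrightarrow> ?g t \<le> ?g s"
      using that nonneg by auto
  qed
  have False if s: "0 < s1" "s1 < s2" "s2 < pi" "?g s1 = 0" "?g s2 = 0" for s1 s2
  proof -
    obtain s where "s1 < s" "s < s2" "?g' s = 0"
      using MVT2[OF \<open>s1 < s2\<close>, of ?g ?g'] has_real_derivative_gamma_value s by auto
    then have "?g' t = 0" if "t \<in> {s1, s, s2}" for t
      using that min s by auto
    then have "a $ 2 * cos (2 * t) - a $ 1 * sin (2 * t) = 3/8 * a $ 3 * sin t ^ 3"
      if "t \<in> {s1, s, s2}" for t
      using crit that by blast
    then show False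
      using no_three_critical_points[OF nz \<open>0 < s1\<close> \<open>s1 < s\<close> \<open>s < s2\<close> \<open>s2 < pi\<close>] by blast
  qed
  then show ?thesis
    using t zeros by (cases t1 t2 rule: linorder_cases) auto
qed

lemma inner_axis4_lift4 [simp]: "axis 4 1 \<bullet> lift4 q = 1"
  by (simp add: inner_axis')

lemma lift4_convex_combination:
  "lift4 (a *\<^sub>R x + (1 - a) *\<^sub>R y) = a *\<^sub>R lift4 x + (1 - a) *\<^sub>R lift4 y"
  by (simp add: vec_eq_iff forall_4 algebra_simps)

lemma lift4_setC_subset: "lift4 ` setC \<subseteq> convex_cone hull (lift4 ` curve_points)"
  unfolding setC_eq_convex_hull convex_hull_lift4[symmetric] by (rule convex_hull_subset_convex_cone_hull)

lemma zero_set_cases_vertical: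
  fixes a :: "real^4"
  assumes a12: "a $ 1 = 0" "a $ 2 = 0" and nonzero: "a \<notin> perp (lift4 ` curve_points)"
  shows "(\<exists>\<sigma>\<in>{1, -1}. \<forall>q\<in>curve_points. a \<bullet> lift4 q = 0 \<longrightarrow> q $ 3 = \<sigma>) \<or>
    (\<exists>p1 p2. {q \<in> curve_points. a \<bullet> lift4 q = 0} \<subseteq> {p1, p2})"
proof -
  have val: "a \<bullet> lift4 q = a $ 3 * q $ 3 + a $ 4" for q
    using a12 by (simp add: inner_lift4)
  show ?thesis
  proof (cases "a $ 3 = 0")
    case True
    then have "a $ 4 \<noteq> 0"
      using nonzero val unfolding perp_def by auto
    then have "{q \<in> curve_points. a \<bullet> lift4 q = 0} = {}"
      using val True by auto
    then show ?thesis
      by blast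
  next
    case False
    define z where "z = - a $ 4 / a $ 3"
    have zero: "a \<bullet> lift4 q = 0 \<longleftrightarrow> q $ 3 = z" for q
      using val False by (auto simp: z_def field_simps)
    show ?thesis
    proof (cases "z \<in> {1, -1}")
      case True
      then show ?thesis
        using zero by blast
    next
      case False
      then show ?thesis
        using curve_points_at_height_unique[OF False] zero
        by (intro disjI2 ex_subset_doubleton_if_unique) auto
    qed
  qed
qed

lemma circle_zero_of_supporting_functional:
  fixes a :: "real^4"
  assumes a: "a \<in> dual_cone (lift4 ` curve_points)" "a $ 1 = - r * cos \<theta>" "a $ 2 = - r * sin \<theta>" "0 < r"
    and \<sigma>: "\<sigma> \<in> {1, -1}" and zero: "a \<bullet> lift4 (circle_point \<sigma> t) = 0"
  shows "circle_point \<sigma> t = circle_point \<sigma> \<theta>" "\<sigma> * a $ 3 + a $ 4 = r"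
proof -
  have val: "a \<bullet> lift4 (circle_point \<sigma> s) = \<sigma> * a $ 3 + a $ 4 - r * cos (s - \<theta>)" for s
    by (simp add: inner_lift4 a cos_diff algebra_simps)
  have "0 \<le> a \<bullet> lift4 (circle_point \<sigma> \<theta>)"
    using a(1) circle_point_in_curve_points[OF \<sigma>] unfolding dual_cone_def by blast
  moreover have "r * cos (t - \<theta>) \<le> r * 1"
    using \<open>0 < r\<close> by (intro mult_left_mono) simp_all
  ultimately show r: "\<sigma> * a $ 3 + a $ 4 = r"
    using val[of \<theta>] val[of t] zero by simp
  then have "cos (t - \<theta>) = 1"
    using val[of t] zero \<open>0 < r\<close> by simp
  then show "circle_point \<sigma> t = circle_point \<sigma> \<theta>"
    using cos_sin_eq_if_cos_diff_eq_1 by (simp add: circle_point_eq_iff)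
qed

lemma no_zeros_on_both_circles_and_gamma:
  fixes a :: "real^4"
  assumes a: "a \<in> dual_cone (lift4 ` curve_points)" "a $ 1 = - r * cos \<theta>" "a $ 2 = - r * sin \<theta>" "0 < r"
    and \<theta>: "0 \<le> \<theta>" "\<theta> < 2 * pi"
    and circles: "a $ 3 + a $ 4 = r" "- a $ 3 + a $ 4 = r"
    and t1: "0 < t1" "t1 < pi" "a \<bullet> lift4 (curve_gamma t1) = 0"
  shows False
proof -
  have "a $ 3 = 0" "a $ 4 = r"
    using circles by linarith+
  then have val: "a \<bullet> lift4 (curve_gamma t) = r * (1 + cos \<theta> - 2 * cos (2 * t - \<theta>))" for t
    by (simp add: inner_lift4 a cos_diff algebra_simps)
  have "0 \<le> a \<bullet> lift4 (curve_gamma (\<theta> / 2))"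
    using a(1) curve_gamma_in_curve_points[of "\<theta> / 2"] \<theta> unfolding dual_cone_def by auto
  then have "1 \<le> cos \<theta>"
    using val[of "\<theta> / 2"] \<open>0 < r\<close> by (simp add: zero_le_mult_iff)
  then have "cos \<theta> = 1"
    using cos_le_one[of \<theta>] by linarith
  then have "sin \<theta> = 0"
    using sin_cos_squared_add[of \<theta>] by simp
  then have "cos (2 * t1) = 1"
    using val[of t1] t1(3) \<open>0 < r\<close> \<open>cos \<theta> = 1\<close> by (simp add: cos_diff)
  then show False
    using cos_eq_1_imp_eq_0[of "2 * t1"] t1 by auto
qed

lemma zero_set_with_interior_gamma_zero:
  fixes a :: "real^4"
  assumes a: "a \<in> dual_cone (lift4 ` curve_points)" "a $ 1 = - r * cos \<theta>" "a $ 2 = - r * sin \<theta>" "0 < r"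
    and \<theta>: "0 \<le> \<theta>" "\<theta> < 2 * pi" and a12: "a $ 1 \<noteq> 0 \<or> a $ 2 \<noteq> 0"
    and t1: "0 < t1" "t1 < pi" "a \<bullet> lift4 (curve_gamma t1) = 0"
  shows "\<exists>\<sigma>. {q \<in> curve_points. a \<bullet> lift4 q = 0} \<subseteq> {circle_point \<sigma> \<theta>, curve_gamma t1}"
proof -
  have not_both: "\<not> (a $ 3 + a $ 4 = r \<and> - a $ 3 + a $ 4 = r)"
    using no_zeros_on_both_circles_and_gamma[OF a \<theta> _ _ t1] by blast
  have nonneg: "0 \<le> a \<bullet> lift4 (curve_gamma t)" if "0 \<le> t" "t \<le> pi" for t
    using a(1) curve_gamma_in_curve_points[OF that] unfolding dual_cone_def by blast
  define \<sigma> :: real where "\<sigma> = (if a $ 3 + a $ 4 = r then 1 else -1)"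
  have "q = circle_point \<sigma> \<theta> \<or> q = curve_gamma t1" if q: "q \<in> curve_points" "a \<bullet> lift4 q = 0" for q
    using q(1)
  proof (cases rule: curve_points_cases)
    case (circle \<tau> t)
    then have "q = circle_point \<tau> \<theta>" "\<tau> * a $ 3 + a $ 4 = r"
      using circle_zero_of_supporting_functional[OF a circle(1)] q(2) by simp_all
    moreover have "\<tau> = \<sigma>"
      using circle(1) calculation(2) not_both unfolding \<sigma>_def by auto
    ultimately show ?thesis
      by simp
  next
    case (gamma t)
    then show ?thesis
      using gamma_zero_unique[OF a12 nonneg _ _ _ _ _ t1(3)] t1(1,2) q(2) by blast
  qed
  then show ?thesis
    by blast
qed

lemma zero_set_subset_two_points:
  fixes a :: "real^4"
  assumes a: "a \<in> dual_cone (lift4 ` curve_points)" and a12: "a $ 1 \<noteq> 0 \<or> a $ 2 \<noteq> 0"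
  shows "\<exists>p1 p2. {q \<in> curve_points. a \<bullet> lift4 q = 0} \<subseteq> {p1, p2}"
proof -
  define r where "r = sqrt ((a $ 1)\<^sup>2 + (a $ 2)\<^sup>2)"
  have "0 < r"
    using a12 by (simp add: r_def sum_power2_gt_zero_iff)
  obtain \<theta> where a_polar: "a $ 1 = - r * cos \<theta>" "a $ 2 = - r * sin \<theta>" and \<theta>: "0 \<le> \<theta>" "\<theta> < 2 * pi"
    unfolding r_def by (rule polar_coordinates_opposite)
  show ?thesis
  proof (cases "\<exists>t1. 0 < t1 \<and> t1 < pi \<and> a \<bullet> lift4 (curve_gamma t1) = 0")
    case True
    then show ?thesis
      using zero_set_with_interior_gamma_zero[OF a a_polar \<open>0 < r\<close> \<theta> a12] by blast
  next
    case False
    have "q = circle_point 1 \<theta> \<or> q = circle_point (-1) \<theta>"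
      if q: "q \<in> curve_points" "a \<bullet> lift4 q = 0" for q
      using q(1)
    proof (cases rule: curve_points_cases)
      case (circle \<tau> t)
      then show ?thesis
        using circle_zero_of_supporting_functional[OF a a_polar \<open>0 < r\<close> circle(1)] q(2) by auto
    next
      case (gamma t)
      then show ?thesis
        using False q(2) by blast
    qed
    then show ?thesis
      by blast
  qed
qed

lemma face_generators_cases:
  assumes F: "is_face F (convex_cone hull (lift4 ` curve_points))"
    and proper: "F \<noteq> convex_cone hull (lift4 ` curve_points)"
  shows "(\<exists>\<sigma>\<in>{1, -1}. \<forall>q\<in>curve_points. lift4 q \<in> F \<longrightarrow> q $ 3 = \<sigma>) \<or>
    (\<exists>p1 p2. {q \<in> curve_points. lift4 q \<in> F} \<subseteq> {p1, p2})"
proof (cases "F = {}")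
  case False
  obtain a where a: "a \<in> dual_cone (lift4 ` curve_points)" "a \<in> perp F"
    "a \<notin> perp (lift4 ` curve_points)"
    using exposing_functional_of_proper_face[OF convex_cone_convex_cone_hull is_face_imp_face_of[OF F] False proper]
    unfolding dual_cone_convex_cone_hull perp_convex_cone_hull by blast
  have "{q \<in> curve_points. lift4 q \<in> F} \<subseteq> {q \<in> curve_points. a \<bullet> lift4 q = 0}"
    using a(2) unfolding perp_def by blast
  moreover have "(\<exists>\<sigma>\<in>{1, -1}. \<forall>q\<in>curve_points. a \<bullet> lift4 q = 0 \<longrightarrow> q $ 3 = \<sigma>) \<or>
      (\<exists>p1 p2. {q \<in> curve_points. a \<bullet> lift4 q = 0} \<subseteq> {p1, p2})"
  proof (cases "a $ 1 = 0 \<and> a $ 2 = 0")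
    case True
    then show ?thesis
      using zero_set_cases_vertical a(3) by blast
  next
    case False
    then show ?thesis
      using zero_set_subset_two_points[OF a(1)] by blast
  qed
  ultimately show ?thesis
    by blast
qed simp

section \<open>Duals of faces\<close>

lemma dual_decompose_two_points:
  assumes E: "E \<subseteq> curve_points" "E \<subseteq> {p1, p2}" and y: "\<forall>p\<in>E. 0 \<le> y \<bullet> lift4 p"
  shows "\<exists>u\<in>dual_cone (lift4 ` curve_points). y - u \<in> perp (lift4 ` E)"
proof (rule dual_cone_interpolation)
  have "finite E"
    using E(2) by (rule finite_subset) simp
  then show "finite (lift4 ` E)"
    by simp
  show "\<forall>p\<in>lift4 ` E. 0 \<le> y \<bullet> p"
    using y by blast
  fix p'
  assume "p' \<in> lift4 ` E"
  then obtain p where p: "p \<in> E" "p' = lift4 p"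
    by blast
  show "\<exists>h\<in>dual_cone (lift4 ` curve_points). 0 < h \<bullet> p' \<and> (\<forall>q\<in>lift4 ` E - {p'}. h \<bullet> q = 0)"
  proof (cases "E \<subseteq> {p}")
    case True
    have "axis 4 1 \<in> dual_cone (lift4 ` curve_points)"
      unfolding dual_cone_def by auto
    then show ?thesis
      using True p by (intro bexI[of _ "axis 4 1"]) auto
  next
    case False
    then obtain q where q: "q \<in> E" "q \<noteq> p"
      by blast
    then have "E - {p} = {q}"
      using E(2) p(1) by auto
    then have others: "lift4 ` E - {p'} = {lift4 q}"
      using image_set_diff[OF inj_lift4, of E "{p}"] p(2) by simp
    have "q \<in> curve_points" "p \<in> curve_points"
      using q(1) p(1) E(1) by blast+
    then obtain h where h: "h \<in> dual_cone (lift4 ` curve_points)"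
      "\<And>x. x \<in> curve_points \<Longrightarrow> h \<bullet> lift4 x = 0 \<longleftrightarrow> x = q"
      using curve_point_exposed by blast
    have "h \<bullet> lift4 q = 0" "h \<bullet> lift4 p \<noteq> 0"
      using h(2) \<open>q \<in> curve_points\<close> \<open>p \<in> curve_points\<close> q(2) by auto
    moreover have "0 \<le> h \<bullet> lift4 p"
      using h(1) \<open>p \<in> curve_points\<close> unfolding dual_cone_def by blast
    ultimately show ?thesis
      using h(1) others p(2) by (intro bexI[of _ h]) auto
  qed
qed

lemma open_disk_point_split:
  fixes m1 m2 :: real
  assumes "m1\<^sup>2 + m2\<^sup>2 < 1"
  obtains a y1 y2 where "0 < a" "a < 1" "y1\<^sup>2 + y2\<^sup>2 \<le> 1"
    "m1 = a * cos \<theta> + (1 - a) * y1" "m2 = a * sin \<theta> + (1 - a) * y2"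
proof -
  define a where "a = (1 - (m1\<^sup>2 + m2\<^sup>2)) / 4"
  have "4 * a = 1 - (m1\<^sup>2 + m2\<^sup>2)"
    unfolding a_def by simp
  moreover have "0 \<le> m1\<^sup>2 + m2\<^sup>2"
    by simp
  ultimately have a: "0 < a" "a < 1" "m1\<^sup>2 + m2\<^sup>2 + 4 * a = 1"
    using assms by linarith+
  have "(m1 * cos \<theta> + m2 * sin \<theta>)\<^sup>2 + (m1 * sin \<theta> - m2 * cos \<theta>)\<^sup>2 = m1\<^sup>2 + m2\<^sup>2"
    using sin_cos_squared_add[of \<theta>] by algebra
  then have "(m1 * cos \<theta> + m2 * sin \<theta>)\<^sup>2 \<le> 1"
    using assms zero_le_power2[of "m1 * sin \<theta> - m2 * cos \<theta>"] by linarith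
  then have "- 1 \<le> m1 * cos \<theta> + m2 * sin \<theta>"
    by (simp add: abs_square_le_1)
  have "(m1 - a * cos \<theta>)\<^sup>2 + (m2 - a * sin \<theta>)\<^sup>2 =
      m1\<^sup>2 + m2\<^sup>2 - 2 * a * (m1 * cos \<theta> + m2 * sin \<theta>) + a\<^sup>2"
    using sin_cos_squared_add[of \<theta>] by algebra
  also have "\<dots> \<le> (1 - a)\<^sup>2"
  proof -
    have "- a \<le> a * (m1 * cos \<theta> + m2 * sin \<theta>)"
      using mult_left_mono[OF \<open>- 1 \<le> m1 * cos \<theta> + m2 * sin \<theta>\<close>, of a] a(1) by simp
    moreover have "(1 - a)\<^sup>2 = 1 - 2 * a + a\<^sup>2"
      by (simp add: power2_eq_square algebra_simps)
    ultimately show ?thesis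
      using a(3) by linarith
  qed
  finally have "((m1 - a * cos \<theta>) / (1 - a))\<^sup>2 + ((m2 - a * sin \<theta>) / (1 - a))\<^sup>2 \<le> 1"
    using a by (simp add: power_divide add_divide_distrib[symmetric])
  then show ?thesis
    using that[of a "(m1 - a * cos \<theta>) / (1 - a)" "(m2 - a * sin \<theta>) / (1 - a)"] a by simp
qed

lemma disk_point_in_setC:
  assumes "x1\<^sup>2 + x2\<^sup>2 \<le> 1" and \<sigma>: "\<sigma> \<in> {1, -1}"
  shows "vector [x1, x2, \<sigma>] \<in> setC"
proof -
  define \<rho> where "\<rho> = sqrt (x1\<^sup>2 + x2\<^sup>2)"
  obtain \<phi> where \<phi>: "x1 = \<rho> * cos \<phi>" "x2 = \<rho> * sin \<phi>"
    unfolding \<rho>_def by (rule polar_coordinates)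
  have \<rho>: "0 \<le> \<rho>" "\<rho> \<le> 1"
    using assms(1) by (auto simp: \<rho>_def)
  have "vector [x1, x2, \<sigma>] =
      ((1 + \<rho>) / 2) *\<^sub>R circle_point \<sigma> \<phi> + ((1 - \<rho>) / 2) *\<^sub>R circle_point \<sigma> (\<phi> + pi)"
    unfolding vec3_eq_iff using \<phi> by (simp add: field_simps)
  also have "\<dots> \<in> convex hull curve_points"
  proof (rule convexD[OF convex_convex_hull])
    show "circle_point \<sigma> \<phi> \<in> convex hull curve_points" "circle_point \<sigma> (\<phi> + pi) \<in> convex hull curve_points"
      using circle_point_in_curve_points[OF \<sigma>] by (simp_all add: hull_inc)
  qed (use \<rho> in \<open>simp_all add: field_simps\<close>)
  finally show ?thesis
    unfolding setC_eq_convex_hull .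
qed

lemma circle_in_face:
  assumes F: "is_face F (convex_cone hull (lift4 ` curve_points))" and \<sigma>: "\<sigma> \<in> {1, -1}"
    and p: "p \<in> curve_points" "p $ 3 = \<sigma>" "lift4 p \<in> F"
    and q: "q \<in> curve_points" "q $ 3 = \<sigma>" "lift4 q \<in> F" and "p \<noteq> q"
  shows "lift4 (circle_point \<sigma> \<theta>) \<in> F"
proof -
  obtain s where s: "p = circle_point \<sigma> s"
    using curve_point_in_plane[OF p(1) \<sigma> p(2)] by blast
  obtain t where t: "q = circle_point \<sigma> t"
    using curve_point_in_plane[OF q(1) \<sigma> q(2)] by blast
  \<comment> \<open>The midpoint of \<open>p\<close> and \<open>q\<close> lies in the open disk, hence strictly between the
    circle point at angle \<open>\<theta>\<close> and some point of the disk.\<close>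
  define m1 where "m1 = (cos s + cos t) / 2"
  define m2 where "m2 = (sin s + sin t) / 2"
  have "0 < (cos s - cos t)\<^sup>2 + (sin s - sin t)\<^sup>2"
    using \<open>p \<noteq> q\<close> s t by (auto simp: circle_point_eq_iff sum_power2_gt_zero_iff)
  moreover have "(cos s + cos t)\<^sup>2 + (sin s + sin t)\<^sup>2 + ((cos s - cos t)\<^sup>2 + (sin s - sin t)\<^sup>2) = 4"
    using sin_cos_squared_add[of s] sin_cos_squared_add[of t] by algebra
  moreover have "4 * (m1\<^sup>2 + m2\<^sup>2) = (cos s + cos t)\<^sup>2 + (sin s + sin t)\<^sup>2"
    unfolding m1_def m2_def by (simp add: power_divide)
  ultimately have "m1\<^sup>2 + m2\<^sup>2 < 1"
    by argo
  then obtain a y1 y2 where a: "0 < a" "a < 1" "y1\<^sup>2 + y2\<^sup>2 \<le> 1"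
    "m1 = a * cos \<theta> + (1 - a) * y1" "m2 = a * sin \<theta> + (1 - a) * y2"
    by (rule open_disk_point_split)
  define Y where "Y = (vector [y1, y2, \<sigma>] :: real^3)"
  have "lift4 (circle_point \<sigma> \<theta>) \<in> convex_cone hull (lift4 ` curve_points)"
    by (intro hull_inc imageI circle_point_in_curve_points[OF \<sigma>])
  moreover have "lift4 Y \<in> convex_cone hull (lift4 ` curve_points)"
    using disk_point_in_setC[OF a(3) \<sigma>] lift4_setC_subset unfolding Y_def by blast
  moreover have "(1 / 2) *\<^sub>R lift4 p + (1 - 1 / 2) *\<^sub>R lift4 q \<in> F"
    using F p(3) q(3) unfolding is_face_def by (intro convexD) auto
  moreover have "(1 / 2) *\<^sub>R p + (1 - 1 / 2) *\<^sub>R q = a *\<^sub>R circle_point \<sigma> \<theta> + (1 - a) *\<^sub>R Y"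
    unfolding vec3_eq_iff s t Y_def using a(4,5) unfolding m1_def m2_def by (simp add: field_simps)
  then have "(1 / 2) *\<^sub>R lift4 p + (1 - 1 / 2) *\<^sub>R lift4 q =
      a *\<^sub>R lift4 (circle_point \<sigma> \<theta>) + (1 - a) *\<^sub>R lift4 Y"
    by (simp only: lift4_convex_combination[symmetric])
  ultimately show ?thesis
    using is_faceD[OF F _ _ a(1,2)] by simp
qed

lemma dual_decompose_on_circle:
  assumes \<sigma>: "\<sigma> \<in> {1, -1}" and y: "\<And>t. 0 \<le> y \<bullet> lift4 (circle_point \<sigma> t)"
  shows "\<exists>u\<in>dual_cone (lift4 ` curve_points). \<forall>e. e $ 3 = \<sigma> \<longrightarrow> (y - u) \<bullet> lift4 e = 0"
proof -
  define r where "r = sqrt ((y $ 1)\<^sup>2 + (y $ 2)\<^sup>2)"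
  have "0 \<le> r"
    by (simp add: r_def)
  obtain \<theta> where \<theta>: "y $ 1 = - r * cos \<theta>" "y $ 2 = - r * sin \<theta>"
    unfolding r_def by (rule polar_coordinates_opposite)
  \<comment> \<open>\<open>y\<close> is smallest on the circle at angle \<open>\<theta>\<close>.\<close>
  obtain l where h: "circle_exposer \<sigma> \<theta> l \<in> dual_cone (lift4 ` curve_points)"
    using circle_point_exposed[OF \<sigma>, of \<theta>] by blast
  define c where "c = \<sigma> * y $ 3 + y $ 4 - r"
  have "y $ 1 * cos \<theta> + y $ 2 * sin \<theta> = - r * (cos \<theta> * cos \<theta> + sin \<theta> * sin \<theta>)"
    unfolding \<theta> by algebra
  then have "y \<bullet> lift4 (circle_point \<sigma> \<theta>) = c"
    by (simp add: inner_lift4 c_def)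
  then have "0 \<le> c"
    using y[of \<theta>] by simp
  define u where "u = r *\<^sub>R circle_exposer \<sigma> \<theta> l + c *\<^sub>R axis 4 1"
  have "0 \<le> u \<bullet> g" if "g \<in> lift4 ` curve_points" for g
  proof -
    have "0 \<le> circle_exposer \<sigma> \<theta> l \<bullet> g"
      using h that unfolding dual_cone_def by blast
    moreover have "axis 4 1 \<bullet> g = 1"
      using that by auto
    ultimately show ?thesis
      unfolding u_def inner_add_left inner_scaleR_left using \<open>0 \<le> r\<close> \<open>0 \<le> c\<close> by simp
  qed
  then have "u \<in> dual_cone (lift4 ` curve_points)"
    unfolding dual_cone_def by blast
  moreover have "(y - u) \<bullet> lift4 e = 0" if "e $ 3 = \<sigma>" for e
  proof -
    have "\<sigma> * \<sigma> = 1"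
      using \<sigma> by auto
    have "(y - u) \<bullet> lift4 e =
        y \<bullet> lift4 e - r * (circle_exposer \<sigma> \<theta> l \<bullet> lift4 e) - c * (axis 4 1 \<bullet> lift4 e)"
      unfolding u_def by (simp add: inner_diff_left inner_add_left)
    also have "\<dots> = 0"
      unfolding inner_circle_exposer_lift4 inner_axis4_lift4 using that \<theta> \<open>\<sigma> * \<sigma> = 1\<close>
      by (simp add: inner_lift4 c_def algebra_simps)
    finally show ?thesis .
  qed
  ultimately show ?thesis
    by blast
qed

lemma dual_decompose_plane_face:
  assumes F: "is_face F (convex_cone hull (lift4 ` curve_points))" and \<sigma>: "\<sigma> \<in> {1, -1}"
    and plane: "\<forall>q\<in>curve_points. lift4 q \<in> F \<longrightarrow> q $ 3 = \<sigma>" and y: "y \<in> dual_cone F"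
  shows "\<exists>u\<in>dual_cone (lift4 ` curve_points). y - u \<in> perp (lift4 ` {q \<in> curve_points. lift4 q \<in> F})"
proof (cases "\<exists>p\<in>curve_points. \<exists>q\<in>curve_points. lift4 p \<in> F \<and> lift4 q \<in> F \<and> p \<noteq> q")
  case True
  then obtain p q where pq: "p \<in> curve_points" "q \<in> curve_points" "lift4 p \<in> F" "lift4 q \<in> F" "p \<noteq> q"
    by blast
  have "lift4 (circle_point \<sigma> t) \<in> F" for t
    using circle_in_face[OF F \<sigma> pq(1) _ pq(3) pq(2) _ pq(4,5)] plane pq by blast
  then have "0 \<le> y \<bullet> lift4 (circle_point \<sigma> t)" for t
    using y unfolding dual_cone_def by blast
  then obtain u where u: "u \<in> dual_cone (lift4 ` curve_points)" "\<forall>e. e $ 3 = \<sigma> \<longrightarrow> (y - u) \<bullet> lift4 e = 0"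
    using dual_decompose_on_circle[OF \<sigma>] by blast
  then have "y - u \<in> perp (lift4 ` {q \<in> curve_points. lift4 q \<in> F})"
    using plane unfolding perp_def by auto
  then show ?thesis
    using u(1) by blast
next
  case False
  have "\<exists>p1 p2. {q \<in> curve_points. lift4 q \<in> F} \<subseteq> {p1, p2}"
    using False by (intro ex_subset_doubleton_if_unique) blast
  then obtain p1 p2 where "{q \<in> curve_points. lift4 q \<in> F} \<subseteq> {p1, p2}"
    by blast
  moreover have "\<forall>q\<in>{q \<in> curve_points. lift4 q \<in> F}. 0 \<le> y \<bullet> lift4 q"
    using y unfolding dual_cone_def by blast
  ultimately show ?thesis
    by (intro dual_decompose_two_points) auto
qed

lemma face_dual_decompose:
  assumes F: "is_face F (convex_cone hull (lift4 ` curve_points))" and y: "y \<in> dual_cone F"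
  shows "\<exists>u\<in>dual_cone (convex_cone hull (lift4 ` curve_points)). y - u \<in> perp F"
proof (cases "F = convex_cone hull (lift4 ` curve_points)")
  case True
  then show ?thesis
    using y by (intro bexI[of _ y]) (simp_all add: perp_def)
next
  case False
  define E where "E = {q \<in> curve_points. lift4 q \<in> F}"
  have "lift4 ` curve_points \<inter> F = lift4 ` E"
    unfolding E_def by blast
  then have perp_F: "perp F = perp (lift4 ` E)"
    using perp_face_of_convex_cone_hull[OF compact_lift4_curve_points is_face_imp_face_of[OF F]] by simp
  have "\<exists>u\<in>dual_cone (lift4 ` curve_points). y - u \<in> perp (lift4 ` E)"
    using face_generators_cases[OF F False]
  proof (elim disjE bexE exE)
    fix \<sigma>
    assume "\<sigma> \<in> {1, -1}" "\<forall>q\<in>curve_points. lift4 q \<in> F \<longrightarrow> q $ 3 = \<sigma>"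
    then show ?thesis
      using dual_decompose_plane_face[OF F _ _ y] unfolding E_def by blast
  next
    fix p1 p2
    assume "{q \<in> curve_points. lift4 q \<in> F} \<subseteq> {p1, p2}"
    moreover have "\<forall>p\<in>E. 0 \<le> y \<bullet> lift4 p"
      using y unfolding E_def dual_cone_def by blast
    ultimately show ?thesis
      using dual_decompose_two_points[of E p1 p2 y] unfolding E_def by blast
  qed
  then show ?thesis
    unfolding perp_F dual_cone_convex_cone_hull .
qed

theorem proposition5p1:
  shows "nice (cone_of (lift4 ` setC))"
  unfolding cone_of_lift4_setC
  using face_dual_decompose by (rule nice_if_dual_face_decomposes)

end
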